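(* Let $\mathcal{P}$ be a finite bias distribution and let $\ell'\ge2$, $0\le x'\le\ell'-1$ be integers. If the condition $E_p[f_{\ell,x}(p)]=0$ holds for any two of the three pairs $(\ell,x)=(\ell'-1,x')$, $(\ell',x')$, $(\ell',x'+1)$, then it also holds for the remaining pair.
   Context: A finite bias distribution is a probability distribution $\mathcal{P}$ supported on a finite subset of $(0,1)$ that is symmetric: it outputs $a$ and $1-a$ with the same probability. $E_p$ is expectation over $p\sim\mathcal{P}$. $\sigma(p)=\sqrt{(1-p)/p}$; for integers $\ell\ge1$, $0\le x\le\ell$, $f_{\ell,x}(p)=p^x(1-p)^{\ell-x}(x\sigma(p)-(\ell-x)\sigma(1-p))$. *)

theory Defs
  imports "HOL-Probability.Probability"
begin

definition finite_bias_dist :: "real pmf \<Rightarrow> bool" where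
  "finite_bias_dist P \<longleftrightarrow> finite (set_pmf P) \<and> set_pmf P \<subseteq> {0<..<1}
     \<and> (\<forall>a. pmf P a = pmf P (1 - a))"

definition sigma :: "real \<Rightarrow> real" where
  "sigma p = sqrt ((1 - p) / p)"

definition f :: "nat \<Rightarrow> nat \<Rightarrow> real \<Rightarrow> real" where
  "f l x p = p ^ x * (1 - p) ^ (l - x) *
     (real x * sigma p - (real l - real x) * sigma (1 - p))"

definition cond :: "real pmf \<Rightarrow> nat \<Rightarrow> nat \<Rightarrow> bool" where
  "cond P l x \<longleftrightarrow> measure_pmf.expectation P (f l x) = 0"

end

theory Submission
  imports Defs
begin

text \<open>Since \<open>p \<sigma>(p) = (1 - p) \<sigma>(1 - p) = \<surd>(p(1 - p))\<close>, the functions satisfy the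
  Pascal-type recurrence \<open>f l x = f (l + 1) x + f (l + 1) (x + 1)\<close> on \<open>(0,1)\<close>. Taking
  expectations gives a linear relation between the three expectations, so any two of them
  vanishing forces the third to vanish.\<close>

lemma mult_sigma:
  assumes "0 < p"
  shows "p * sigma p = sqrt (p * (1 - p))"
proof -
  have "p * sigma p = sqrt (p\<^sup>2) * sqrt ((1 - p) / p)"
    using assms by (simp add: sigma_def)
  also have "\<dots> = sqrt (p\<^sup>2 * ((1 - p) / p))"
    by (simp only: real_sqrt_mult)
  also have "p\<^sup>2 * ((1 - p) / p) = p * (1 - p)"
    using assms by (simp add: power2_eq_square)
  finally show ?thesis .
qed

lemma mult_sigma_symmetric:
  assumes "0 < p" "p < 1"
  shows "p * sigma p = (1 - p) * sigma (1 - p)"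
  using mult_sigma[of p] mult_sigma[of "1 - p"] assms by (simp add: mult.commute)

lemma f_pascal:
  assumes "0 < p" "p < 1" "x \<le> l"
  shows "f l x p = f (Suc l) x p + f (Suc l) (Suc x) p"
proof -
  define s t where "s = sigma p" and "t = sigma (1 - p)"
  define k where "k = l - x"
  have l: "l = x + k" and balance: "p * s = (1 - p) * t"
    using assms mult_sigma_symmetric[of p] by (simp_all add: k_def s_def t_def)
  have "f (Suc l) x p + f (Suc l) (Suc x) p
      = p ^ x * (1 - p) ^ k * ((1 - p) * (real x * s - (real k + 1) * t)
                               + p * ((real x + 1) * s - real k * t))"
    by (simp add: l f_def s_def t_def algebra_simps)
  also have "(1 - p) * (real x * s - (real k + 1) * t) + p * ((real x + 1) * s - real k * t)
      = real x * s - real k * t"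
    using balance by (simp add: algebra_simps)
  finally show ?thesis
    by (simp add: l f_def s_def t_def algebra_simps)
qed

lemma expectation_f_pascal:
  fixes P :: "real pmf"
  assumes "finite (set_pmf P)" "set_pmf P \<subseteq> {0<..<1}" "x \<le> l"
  shows "measure_pmf.expectation P (f l x)
       = measure_pmf.expectation P (f (Suc l) x) + measure_pmf.expectation P (f (Suc l) (Suc x))"
proof -
  have "measure_pmf.expectation P (f l x)
      = measure_pmf.expectation P (\<lambda>p. f (Suc l) x p + f (Suc l) (Suc x) p)"
    using assms(2,3) by (intro integral_cong_AE) (auto intro!: AE_pmfI f_pascal)
  also have "\<dots> = measure_pmf.expectation P (f (Suc l) x)
                 + measure_pmf.expectation P (f (Suc l) (Suc x))"
    using assms(1) by (intro Bochner_Integration.integral_add integrable_measure_pmf_finite)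
  finally show ?thesis .
qed

theorem lemma2:
  fixes P :: "real pmf" and l' x' :: nat
  assumes "finite_bias_dist P" and "l' \<ge> 2" and "x' \<le> l' - 1"
  shows "(cond P (l' - 1) x' \<and> cond P l' x' \<longrightarrow> cond P l' (x' + 1))
       \<and> (cond P (l' - 1) x' \<and> cond P l' (x' + 1) \<longrightarrow> cond P l' x')
       \<and> (cond P l' x' \<and> cond P l' (x' + 1) \<longrightarrow> cond P (l' - 1) x')"
proof -
  have "finite (set_pmf P)" "set_pmf P \<subseteq> {0<..<1}"
    using assms(1) by (auto simp: finite_bias_dist_def)
  moreover have "Suc (l' - 1) = l'"
    using assms(2) by simp
  ultimately have "measure_pmf.expectation P (f (l' - 1) x')
      = measure_pmf.expectation P (f l' x') + measure_pmf.expectation P (f l' (x' + 1))"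
    using expectation_f_pascal[of P x' "l' - 1"] assms(3) by simp
  then show ?thesis
    unfolding cond_def by linarith
qed

end
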